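(* The map $\phi : \mathbf{PM}_k \to \mathbf{PM}_k^\star$ linearly defined for any $k$-packed matrix $M$ by $\phi(\mathbf{F}_M) := \mathbf{F}^\star_{M^T}$ is a Hopf isomorphism.
   Context: Let $k \geq 1$, $A_k := \{0,1,\dots,k\}$. A $k$-packed matrix of size $n$ is an $n\times n$ matrix with entries in $A_k$ with at least one nonzero entry in each row and column. $\mathbf{PM}_k$ is the bigraded combinatorial Hopf algebra with fundamental basis $(\mathbf{F}_M)$ indexed by $k$-packed matrices, with product $\mathbf{F}_{M_1}\cdot\mathbf{F}_{M_2} = \sum_{M \in \mathrm{Sh}_c(M_1,M_2)} \mathbf{F}_M$ (for sizes $n_1,n_2$, $\mathrm{Sh}_c(M_1,M_2)$ is the set of all matrices obtained by shuffling the columns of $M_1$ with an $n_2 \times n_1$ zero block placed below it, with the columns of $M_2$ with an $n_1\times n_2$ zero block placed above it) and coproduct $\Delta(\mathbf{F}_M) = \sum_{M = [M_1|M_2]} \mathbf{F}_{\operatorname{cp}(M_1)} \otimes \mathbf{F}_{\operatorname{cp}(M_2)}$ (sum over splittings of $M$ into left and right column blocks whose compressions, obtained by deleting null rows and columns, are square). $\mathbf{PM}_k^\star$ is the bigraded dual Hopf algebra, with $(\mathbf{F}^\star_M)$ the adjoint basis of $(\mathbf{F}_M)$; its product shuffles rows ($\mathbf{F}^\star_{M_1}\cdot\mathbf{F}^\star_{M_2} = \sum \mathbf{F}^\star_M$ over all $M$ obtained by shuffling the rows of $[M_1 \mid 0_{n_1\times n_2}]$ with the rows of $[0_{n_2 \times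 n_1} \mid M_2]$) and its coproduct splits into top and bottom row blocks with square compressions. $M^T$ is the transpose of $M$. *)

theory Defs
  imports Main
begin

section \<open>Matrices with natural-number entries, stored as lists of rows\<close>

type_synonym mat = "nat list list"

definition is_mat :: "nat \<Rightarrow> nat \<Rightarrow> mat \<Rightarrow> bool" where
  "is_mat h w M \<longleftrightarrow> length M = h \<and> (\<forall>r\<in>set M. length r = w)"

text \<open>k-packed matrix: square n x n, entries in {0..k}, a nonzero entry in each row and column.
  The empty matrix (n = 0) is the unique packed matrix of size 0.\<close>
definition packed :: "nat \<Rightarrow> mat \<Rightarrow> bool" where
  "packed k M \<longleftrightarrow> (let n = length M in
     is_mat n n M \<and> (\<forall>r\<in>set M. \<forall>x\<in>set r. x \<le> k) \<and>
     (\<forall>i<n. \<exists>j<n. M ! i ! j \<noteq> 0) \<and> (\<forall>j<n. \<exists>i<n. M ! i ! j \<noteq> 0))"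

definition cols :: "nat \<Rightarrow> mat \<Rightarrow> nat list list" where
  "cols w M = map (\<lambda>j. map (\<lambda>r. r ! j) M) [0..<w]"

definition mat_of_cols :: "nat \<Rightarrow> nat list list \<Rightarrow> mat" where
  "mat_of_cols h cs = map (\<lambda>i. map (\<lambda>c. c ! i) cs) [0..<h]"

definition mT :: "mat \<Rightarrow> mat" where
  "mT M = map (\<lambda>j. map (\<lambda>r. r ! j) M) [0..<length M]"

definition cp :: "nat \<Rightarrow> mat \<Rightarrow> mat" where
  "cp w M = (let R = filter (\<lambda>r. \<exists>x\<in>set r. x \<noteq> 0) M;
                 J = filter (\<lambda>j. \<exists>r\<in>set M. r ! j \<noteq> 0) [0..<w]
             in map (\<lambda>r. map (\<lambda>j. r ! j) J) R)"

definition cp_square :: "nat \<Rightarrow> mat \<Rightarrow> bool" where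
  "cp_square w M \<longleftrightarrow>
     length (filter (\<lambda>r. \<exists>x\<in>set r. x \<noteq> 0) M) =
     length (filter (\<lambda>j. \<exists>r\<in>set M. r ! j \<noteq> 0) [0..<w])"

text \<open>Column shuffles Sh_c(M1,M2): shuffle the columns of [M1 ; 0_{n2 x n1}] with
  the columns of [0_{n1 x n2} ; M2].\<close>
definition Sh_c :: "mat \<Rightarrow> mat \<Rightarrow> mat set" where
  "Sh_c M1 M2 = (let n1 = length M1; n2 = length M2 in
     mat_of_cols (n1 + n2) `
       shuffles (map (\<lambda>c. c @ replicate n2 0) (cols n1 M1))
                (map (\<lambda>c. replicate n1 0 @ c) (cols n2 M2)))"

definition Sh_r :: "mat \<Rightarrow> mat \<Rightarrow> mat set" where
  "Sh_r M1 M2 = (let n1 = length M1; n2 = length M2 in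
     shuffles (map (\<lambda>r. r @ replicate n2 0) M1)
              (map (\<lambda>r. replicate n1 0 @ r) M2))"

section \<open>The vector spaces: finitely supported coefficient functions on packed matrices\<close>

definition fsupp :: "('b \<Rightarrow> 'a::zero) \<Rightarrow> 'b set" where
  "fsupp x = {M. x M \<noteq> 0}"

text \<open>Elements of PM_k (and of PM_k^*, which has the same underlying basis set):
  x = sum_M x(M) F_M.\<close>
definition PMk :: "nat \<Rightarrow> (mat \<Rightarrow> 'a::field) set" where
  "PMk k = {x. finite (fsupp x) \<and> (\<forall>M\<in>fsupp x. packed k M)}"

text \<open>Elements of the tensor square, in the basis F_A (x) F_B.\<close>
definition PMk2 :: "nat \<Rightarrow> (mat \<times> mat \<Rightarrow> 'a::field) set" where
  "PMk2 k = {t. finite (fsupp t) \<and> (\<forall>(A,B)\<in>fsupp t. packed k A \<and> packed k B)}"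

definition basisF :: "mat \<Rightarrow> mat \<Rightarrow> 'a::field" where
  "basisF M = (\<lambda>N. if N = M then 1 else 0)"

definition mult_PM :: "(mat \<Rightarrow> 'a::field) \<Rightarrow> (mat \<Rightarrow> 'a) \<Rightarrow> mat \<Rightarrow> 'a" where
  "mult_PM x y = (\<lambda>M. \<Sum>M1\<in>fsupp x. \<Sum>M2\<in>fsupp y.
       x M1 * y M2 * (if M \<in> Sh_c M1 M2 then 1 else 0))"

definition unit_PM :: "mat \<Rightarrow> 'a::field" where
  "unit_PM = basisF []"

definition counit_PM :: "(mat \<Rightarrow> 'a::field) \<Rightarrow> 'a" where
  "counit_PM x = x []"

definition Delta_PM :: "(mat \<Rightarrow> 'a::field) \<Rightarrow> mat \<times> mat \<Rightarrow> 'a" where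
  "Delta_PM x = (\<lambda>(A, B). \<Sum>M\<in>fsupp x. x M *
       (\<Sum>j\<in>{0..length M}.
          (let L = map (take j) M; R = map (drop j) M in
           if cp_square j L \<and> cp_square (length M - j) R \<and>
              cp j L = A \<and> cp (length M - j) R = B then 1 else 0)))"

definition mult_PMd :: "(mat \<Rightarrow> 'a::field) \<Rightarrow> (mat \<Rightarrow> 'a) \<Rightarrow> mat \<Rightarrow> 'a" where
  "mult_PMd x y = (\<lambda>M. \<Sum>M1\<in>fsupp x. \<Sum>M2\<in>fsupp y.
       x M1 * y M2 * (if M \<in> Sh_r M1 M2 then 1 else 0))"

definition unit_PMd :: "mat \<Rightarrow> 'a::field" where
  "unit_PMd = basisF []"

definition counit_PMd :: "(mat \<Rightarrow> 'a::field) \<Rightarrow> 'a" where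
  "counit_PMd x = x []"

definition Delta_PMd :: "(mat \<Rightarrow> 'a::field) \<Rightarrow> mat \<times> mat \<Rightarrow> 'a" where
  "Delta_PMd x = (\<lambda>(A, B). \<Sum>M\<in>fsupp x. x M *
       (\<Sum>i\<in>{0..length M}.
          (let T = take i M; D = drop i M in
           if cp_square (length M) T \<and> cp_square (length M) D \<and>
              cp (length M) T = A \<and> cp (length M) D = B then 1 else 0)))"

definition phi :: "(mat \<Rightarrow> 'a::field) \<Rightarrow> mat \<Rightarrow> 'a" where
  "phi x = (\<lambda>N. \<Sum>M\<in>fsupp x. x M * (if N = mT M then 1 else 0))"

definition tensor_basis_map :: "(mat \<Rightarrow> mat) \<Rightarrow> (mat \<times> mat \<Rightarrow> 'a::field) \<Rightarrow> mat \<times> mat \<Rightarrow> 'a" where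
  "tensor_basis_map g t = (\<lambda>(A, B). \<Sum>(M1, M2)\<in>fsupp t.
       t (M1, M2) * (if A = g M1 \<and> B = g M2 then 1 else 0))"

text \<open>phi is an isomorphism of bialgebras (hence of Hopf algebras) PM_k -> PM_k^*:
  a linear bijection compatible with product, unit, coproduct and counit.\<close>
definition hopf_iso_phi :: "nat \<Rightarrow> 'a::field itself \<Rightarrow> bool" where
  "hopf_iso_phi k (_ :: 'a itself) \<longleftrightarrow>
     bij_betw (phi :: (mat \<Rightarrow> 'a) \<Rightarrow> _) (PMk k) (PMk k) \<and>
     (\<forall>x::mat \<Rightarrow> 'a\<in>PMk k. \<forall>y\<in>PMk k. \<forall>c::'a.
        phi (\<lambda>M. c * x M + y M) = (\<lambda>M. c * phi x M + phi y M)) \<and>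
     (\<forall>x::mat \<Rightarrow> 'a\<in>PMk k. \<forall>y\<in>PMk k. phi (mult_PM x y) = mult_PMd (phi x) (phi y)) \<and>
     phi (unit_PM :: mat \<Rightarrow> 'a) = unit_PMd \<and>
     (\<forall>x::mat \<Rightarrow> 'a\<in>PMk k. Delta_PMd (phi x) = tensor_basis_map mT (Delta_PM x)) \<and>
     (\<forall>x::mat \<Rightarrow> 'a\<in>PMk k. counit_PMd (phi x) = (counit_PM x :: 'a))"

end

theory Submission
  imports Defs
begin

text \<open>Transposition is an involution of the square matrices that preserves packedness, so \<open>phi\<close>
  is the linear bijection induced by a permutation of the common basis. Transposition exchanges
  columns with rows: the column shuffles of \<open>M1, M2\<close> are the transposes of the row shuffles
  of \<open>M1\<^sup>T, M2\<^sup>T\<close>, and cutting \<open>M\<^sup>T\<close> after row \<open>j\<close> gives the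
  transposes of the blocks obtained by cutting \<open>M\<close> after column \<open>j\<close>. Finally compression
  commutes with transposition, because the null rows of \<open>X\<^sup>T\<close> are the null columns
  of \<open>X\<close>.\<close>

definition square :: "mat \<Rightarrow> bool" where
  "square M \<longleftrightarrow> is_mat (length M) (length M) M"

lemma length_mT [simp]: "length (mT M) = length M"
  by (simp add: mT_def)

lemma nth_mT: "i < length M \<Longrightarrow> j < length M \<Longrightarrow> mT M ! j ! i = M ! i ! j"
  by (simp add: mT_def)

lemma square_mT: "square (mT M)"
  by (simp add: square_def is_mat_def mT_def)

lemma mT_mT: assumes "square M" shows "mT (mT M) = M"
proof (rule nth_equalityI)
  fix i assume i: "i < length (mT (mT M))"
  then have "length (M ! i) = length M" using assms by (simp add: square_def is_mat_def)
  then show "mT (mT M) ! i = M ! i" using i by (auto simp: mT_def intro!: nth_equalityI)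
qed simp

lemma mT_eq_iff: "square M \<Longrightarrow> mT M = N \<longleftrightarrow> square N \<and> M = mT N"
  by (metis mT_mT square_mT)

lemma packed_imp_square: "packed k M \<Longrightarrow> square M"
  by (simp add: packed_def square_def Let_def)

lemma packed_mT: assumes "packed k M" shows "packed k (mT M)"
proof -
  let ?n = "length M"
  have rows: "\<forall>i<?n. \<exists>j<?n. M ! i ! j \<noteq> 0" and cols: "\<forall>j<?n. \<exists>i<?n. M ! i ! j \<noteq> 0"
    using assms by (simp_all add: packed_def Let_def)
  have "i < ?n \<Longrightarrow> j < ?n \<Longrightarrow> M ! i ! j \<le> k" for i j
    using assms by (simp add: packed_def Let_def is_mat_def) (metis nth_mem)
  then have "\<forall>r\<in>set (mT M). \<forall>x\<in>set r. x \<le> k"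
    by (auto simp: mT_def in_set_conv_nth)
  moreover have "\<forall>i<?n. \<exists>j<?n. mT M ! i ! j \<noteq> 0" "\<forall>j<?n. \<exists>i<?n. mT M ! i ! j \<noteq> 0"
    using rows cols by (metis nth_mT)+
  ultimately show ?thesis using square_mT[of M] by (simp add: packed_def Let_def square_def)
qed

lemma sum_basis_involution:
  fixes x :: "'b \<Rightarrow> 'a::semiring_1"
  assumes "finite (fsupp x)" and "\<forall>M\<in>fsupp x. P M"
    and "\<And>M. P (g M)" and "\<And>M. P M \<Longrightarrow> g (g M) = M"
  shows "(\<Sum>M\<in>fsupp x. x M * (if N = g M then 1 else 0)) = (if P N then x (g N) else 0)"
proof -
  have "(\<Sum>M\<in>fsupp x. x M * (if N = g M then 1 else 0)) =
        (\<Sum>M\<in>fsupp x. if g N = M \<and> P N then x M else 0)"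
    using assms(2-4) by (intro sum.cong) auto
  also have "\<dots> = (if P N then x (g N) else 0)"
    using assms(1) by (cases "P N") (auto simp: fsupp_def)
  finally show ?thesis .
qed

lemma phi_apply:
  assumes "finite (fsupp x)" and "\<forall>M\<in>fsupp x. square M"
  shows "phi x N = (if square N then x (mT N) else 0)"
  unfolding phi_def using assms by (rule sum_basis_involution) (simp_all add: square_mT mT_mT)

lemma PMk_imp_square: "x \<in> PMk k \<Longrightarrow> M \<in> fsupp x \<Longrightarrow> square M"
  by (auto simp: PMk_def packed_imp_square)

lemma phi_PMk_apply: "x \<in> PMk k \<Longrightarrow> phi x N = (if square N then x (mT N) else 0)"
  by (intro phi_apply) (auto simp: PMk_def packed_imp_square)

lemma phi_PMk_apply_mT: "x \<in> PMk k \<Longrightarrow> square M \<Longrightarrow> phi x (mT M) = x M"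
  by (simp add: phi_PMk_apply square_mT mT_mT)

lemma inj_on_mT_fsupp: "x \<in> PMk k \<Longrightarrow> inj_on mT (fsupp x)"
  by (metis PMk_imp_square inj_onI mT_mT)

lemma fsupp_phi: assumes "x \<in> PMk k" shows "fsupp (phi x) = mT ` fsupp x"
  using PMk_imp_square[OF assms]
  by (auto simp: fsupp_def phi_PMk_apply[OF assms] image_iff square_mT mT_mT
      intro!: exI[of _ "mT _"])

lemma tensor_basis_map_mT_apply:
  assumes "finite (fsupp t)" and "\<forall>(A, B)\<in>fsupp t. square A \<and> square B"
  shows "tensor_basis_map mT t (A, B) =
    (if square A \<and> square B then t (mT A, mT B) else 0)"
proof -
  have "tensor_basis_map mT t (A, B) =
        (\<Sum>p\<in>fsupp t. t p * (if (A, B) = map_prod mT mT p then 1 else 0))"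
    unfolding tensor_basis_map_def by (auto intro!: sum.cong)
  also have "\<dots> = (if (\<lambda>(A, B). square A \<and> square B) (A, B) then t (map_prod mT mT (A, B)) else 0)"
    using assms by (intro sum_basis_involution) (auto simp: square_mT mT_mT)
  finally show ?thesis by simp
qed

lemma phi_in_PMk: assumes "x \<in> PMk k" shows "phi x \<in> PMk k"
  using assms by (auto simp: PMk_def fsupp_phi[OF assms] packed_mT)

lemma phi_phi: assumes "x \<in> PMk k" shows "phi (phi x) = x"
proof
  fix N
  have "x N \<noteq> 0 \<Longrightarrow> square N" using PMk_imp_square[OF assms] by (simp add: fsupp_def)
  then show "phi (phi x) N = x N"
    by (auto simp: phi_PMk_apply[OF phi_in_PMk[OF assms]] phi_PMk_apply[OF assms] square_mT mT_mT)
qed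

lemma bij_betw_phi: "bij_betw phi (PMk k) (PMk k)"
  by (rule bij_betw_byWitness[where f' = phi]) (auto simp: phi_phi phi_in_PMk)

lemma phi_linear:
  assumes x: "x \<in> PMk k" and y: "y \<in> PMk k"
  shows "phi (\<lambda>M. c * x M + y M) = (\<lambda>M. c * phi x M + phi y M)"
proof -
  have sub: "fsupp (\<lambda>M. c * x M + y M) \<subseteq> fsupp x \<union> fsupp y" by (auto simp: fsupp_def)
  have "finite (fsupp x \<union> fsupp y)" using x y by (simp add: PMk_def)
  moreover have "\<forall>M\<in>fsupp x \<union> fsupp y. square M" using PMk_imp_square x y by blast
  ultimately have "phi (\<lambda>M. c * x M + y M) N =
      (if square N then c * x (mT N) + y (mT N) else 0)" for N
    using sub by (intro phi_apply) (auto intro: finite_subset)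
  then show ?thesis by (auto simp: phi_PMk_apply[OF x] phi_PMk_apply[OF y])
qed

lemma phi_unit: "phi unit_PM = unit_PMd"
proof
  fix N
  have "fsupp (unit_PM :: mat \<Rightarrow> 'a) = {[]}" by (auto simp: fsupp_def unit_PM_def basisF_def)
  then have "phi (unit_PM :: mat \<Rightarrow> 'a) N = (if square N then unit_PM (mT N) else 0)"
    by (intro phi_apply) (auto simp: square_def is_mat_def)
  then show "phi (unit_PM :: mat \<Rightarrow> 'a::field) N = unit_PMd N"
    by (auto simp: unit_PM_def unit_PMd_def basisF_def square_def is_mat_def mT_def)
qed

lemma phi_counit: "x \<in> PMk k \<Longrightarrow> counit_PMd (phi x) = counit_PM x"
  by (simp add: counit_PMd_def counit_PM_def phi_PMk_apply square_def is_mat_def mT_def)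

lemma square_if_in_Sh_r:
  assumes "N \<in> Sh_r (mT M1) (mT M2)"
  shows "square N" and "length N = length M1 + length M2"
proof -
  show len: "length N = length M1 + length M2"
    using length_shuffles[OF assms[unfolded Sh_r_def Let_def]] by simp
  have "set N = set (map (\<lambda>r. r @ replicate (length M2) 0) (mT M1)) \<union>
                set (map (\<lambda>r. replicate (length M1) 0 @ r) (mT M2))"
    using set_shuffles[OF assms[unfolded Sh_r_def Let_def]] by simp
  then show "square N" using len by (auto simp: square_def is_mat_def mT_def)
qed

lemma Sh_c_eq_mT_image: "Sh_c M1 M2 = mT ` Sh_r (mT M1) (mT M2)"
proof -
  have "Sh_c M1 M2 = mat_of_cols (length M1 + length M2) ` Sh_r (mT M1) (mT M2)"
    by (simp add: Sh_c_def Sh_r_def Let_def mT_def cols_def)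
  also have "\<dots> = mT ` Sh_r (mT M1) (mT M2)"
  proof (rule image_cong[OF refl])
    fix Z assume "Z \<in> Sh_r (mT M1) (mT M2)"
    then have "length Z = length M1 + length M2" by (rule square_if_in_Sh_r(2))
    then show "mat_of_cols (length M1 + length M2) Z = mT Z" by (simp add: mat_of_cols_def mT_def)
  qed
  finally show ?thesis .
qed

lemma square_if_in_Sh_c: "M \<in> Sh_c M1 M2 \<Longrightarrow> square M"
  by (auto simp: Sh_c_eq_mT_image square_mT)

lemma finite_Sh_c: "finite (Sh_c M1 M2)"
  by (simp add: Sh_c_eq_mT_image Sh_r_def Let_def)

lemma in_Sh_r_mT_iff:
  "N \<in> Sh_r (mT M1) (mT M2) \<longleftrightarrow> square N \<and> mT N \<in> Sh_c M1 M2"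
proof
  assume "N \<in> Sh_r (mT M1) (mT M2)"
  then show "square N \<and> mT N \<in> Sh_c M1 M2"
    unfolding Sh_c_eq_mT_image by (intro conjI imageI square_if_in_Sh_r(1))
next
  assume "square N \<and> mT N \<in> Sh_c M1 M2"
  then obtain Z where Z: "Z \<in> Sh_r (mT M1) (mT M2)" and "mT N = mT Z" and "square N"
    unfolding Sh_c_eq_mT_image by blast
  then have "N = Z" using mT_mT[OF \<open>square N\<close>] mT_mT[OF square_if_in_Sh_r(1)[OF Z]] by metis
  with Z show "N \<in> Sh_r (mT M1) (mT M2)" by simp
qed

lemma phi_mult:
  assumes x: "x \<in> PMk k" and y: "y \<in> PMk k"
  shows "phi (mult_PM x y) = mult_PMd (phi x) (phi y)"
proof
  fix N
  let ?S = "\<Union>M1\<in>fsupp x. \<Union>M2\<in>fsupp y. Sh_c M1 M2"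
  have "fsupp (mult_PM x y) \<subseteq> ?S"
    unfolding mult_PM_def fsupp_def
    by (force elim!: sum.not_neutral_contains_not_neutral split: if_splits)
  moreover have "finite ?S" using x y by (simp add: PMk_def finite_Sh_c)
  ultimately have lhs: "phi (mult_PM x y) N = (if square N then mult_PM x y (mT N) else 0)"
    by (intro phi_apply) (auto intro: finite_subset square_if_in_Sh_c)
  have "mult_PMd (phi x) (phi y) N =
     (\<Sum>M1\<in>fsupp x. \<Sum>M2\<in>fsupp y.
        phi x (mT M1) * phi y (mT M2) * (if N \<in> Sh_r (mT M1) (mT M2) then 1 else 0))"
    by (simp add: mult_PMd_def fsupp_phi[OF x] fsupp_phi[OF y] sum.reindex
        inj_on_mT_fsupp[OF x] inj_on_mT_fsupp[OF y])
  also have "\<dots> = (\<Sum>M1\<in>fsupp x. \<Sum>M2\<in>fsupp y.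
        x M1 * y M2 * (if square N \<and> mT N \<in> Sh_c M1 M2 then 1 else 0))"
    using PMk_imp_square[OF x] PMk_imp_square[OF y]
    by (intro sum.cong)
      (simp_all add: phi_PMk_apply_mT[OF x] phi_PMk_apply_mT[OF y] in_Sh_r_mT_iff)
  finally show "phi (mult_PM x y) N = mult_PMd (phi x) (phi y) N"
    unfolding lhs by (simp add: mult_PM_def)
qed

definition nonzero_rows :: "nat \<Rightarrow> mat \<Rightarrow> nat list" where
  "nonzero_rows w X = filter (\<lambda>i. \<exists>j<w. X ! i ! j \<noteq> 0) [0..<length X]"

definition nonzero_cols :: "nat \<Rightarrow> mat \<Rightarrow> nat list" where
  "nonzero_cols w X = filter (\<lambda>j. \<exists>i<length X. X ! i ! j \<noteq> 0) [0..<w]"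

lemma bex_set_conv_ex_nth: "(\<exists>x\<in>set xs. P x) \<longleftrightarrow> (\<exists>i<length xs. P (xs ! i))"
  using all_set_conv_all_nth[of xs "\<lambda>x. \<not> P x"] by blast

lemma filter_nonnull_rows:
  assumes "is_mat h w X"
  shows "filter (\<lambda>r. \<exists>x\<in>set r. x \<noteq> 0) X = map (nth X) (nonzero_rows w X)"
proof -
  have "filter (\<lambda>r. \<exists>x\<in>set r. x \<noteq> 0) (map (nth X) [0..<length X]) =
        map (nth X) (filter (\<lambda>i. \<exists>x\<in>set (X ! i). x \<noteq> 0) [0..<length X])"
    by (simp add: filter_map o_def)
  also have "filter (\<lambda>i. \<exists>x\<in>set (X ! i). x \<noteq> 0) [0..<length X] = nonzero_rows w X"
    unfolding nonzero_rows_def using assms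
    by (intro filter_cong) (simp_all add: bex_set_conv_ex_nth is_mat_def)
  finally show ?thesis by (simp add: map_nth)
qed

lemma filter_nonnull_cols:
  "filter (\<lambda>j. \<exists>r\<in>set X. r ! j \<noteq> 0) [0..<w] = nonzero_cols w X"
  unfolding nonzero_cols_def by (intro filter_cong) (simp_all add: bex_set_conv_ex_nth)

lemma cp_conv_nth:
  "is_mat h w X \<Longrightarrow> cp w X = map (\<lambda>i. map (\<lambda>j. X ! i ! j) (nonzero_cols w X)) (nonzero_rows w X)"
  unfolding cp_def Let_def
  by (subst filter_nonnull_rows, assumption, subst filter_nonnull_cols) (simp add: o_def)

lemma cp_square_iff:
  "is_mat h w X \<Longrightarrow> cp_square w X \<longleftrightarrow> length (nonzero_rows w X) = length (nonzero_cols w X)"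
  unfolding cp_square_def
  by (subst filter_nonnull_rows, assumption, subst filter_nonnull_cols) simp

lemma square_cp: "cp_square w X \<Longrightarrow> square (cp w X)"
  by (simp add: cp_square_def cp_def Let_def square_def is_mat_def)

lemma nth_cols: "j < w \<Longrightarrow> i < length X \<Longrightarrow> cols w X ! j ! i = X ! i ! j"
  by (simp add: cols_def)

lemma is_mat_cols: "is_mat w (length X) (cols w X)"
  by (auto simp: is_mat_def cols_def)

lemma nonzero_rows_cols: "nonzero_rows (length X) (cols w X) = nonzero_cols w X"
  unfolding nonzero_rows_def nonzero_cols_def by (intro filter_cong) (auto simp: cols_def)

lemma nonzero_cols_cols: "is_mat h w X \<Longrightarrow> nonzero_cols (length X) (cols w X) = nonzero_rows w X"
  unfolding nonzero_rows_def nonzero_cols_def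
  by (intro filter_cong) (auto simp: nth_cols is_mat_def cols_def)

lemma cp_square_cols: "is_mat h w X \<Longrightarrow> cp_square (length X) (cols w X) \<longleftrightarrow> cp_square w X"
  by (metis cp_square_iff is_mat_cols nonzero_rows_cols nonzero_cols_cols)

lemma cp_cols:
  assumes X: "is_mat h w X" and "cp_square w X"
  shows "cp (length X) (cols w X) = mT (cp w X)"
proof -
  have eq: "length (nonzero_rows w X) = length (nonzero_cols w X)"
    using assms cp_square_iff by blast
  have "\<forall>j\<in>set (nonzero_cols w X). j < w" "\<forall>i\<in>set (nonzero_rows w X). i < length X"
    by (simp_all add: nonzero_cols_def nonzero_rows_def)
  then have "cp (length X) (cols w X) =
      map (\<lambda>j. map (\<lambda>i. X ! i ! j) (nonzero_rows w X)) (nonzero_cols w X)"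
    by (auto simp: cp_conv_nth[OF is_mat_cols] nonzero_rows_cols nonzero_cols_cols[OF X] nth_cols)
  also have "\<dots> = mT (cp w X)"
    using eq by (auto simp: cp_conv_nth[OF X] mT_def intro!: nth_equalityI)
  finally show ?thesis .
qed

lemma cp_cols_eq_iff:
  assumes "is_mat h w X"
  shows "cp_square (length X) (cols w X) \<and> cp (length X) (cols w X) = A \<longleftrightarrow>
    square A \<and> cp_square w X \<and> cp w X = mT A"
proof (cases "cp_square w X")
  case True
  then show ?thesis
    using assms mT_eq_iff[OF square_cp[OF True]] by (simp add: cp_square_cols cp_cols)
qed (simp add: cp_square_cols[OF assms])

lemma take_mT: "j \<le> length M \<Longrightarrow> take j (mT M) = cols j (map (take j) M)"
  by (auto simp: mT_def cols_def take_map intro!: nth_equalityI)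

lemma drop_mT:
  assumes "square M"
  shows "drop j (mT M) = cols (length M - j) (map (drop j) M)"
proof (rule nth_equalityI)
  fix c assume "c < length (drop j (mT M))"
  moreover have "\<forall>r\<in>set M. length r = length M" using assms by (simp add: square_def is_mat_def)
  ultimately show "drop j (mT M) ! c = cols (length M - j) (map (drop j) M) ! c"
    by (auto simp: mT_def cols_def intro!: map_cong)
qed (simp add: cols_def)

lemma row_split_mT_iff:
  assumes "square M" and "j \<le> length M"
  shows "cp_square (length M) (take j (mT M)) \<and> cp_square (length M) (drop j (mT M)) \<and>
      cp (length M) (take j (mT M)) = A \<and> cp (length M) (drop j (mT M)) = B \<longleftrightarrow>
    square A \<and> square B \<and>
      cp_square j (map (take j) M) \<and> cp_square (length M - j) (map (drop j) M) \<and>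
      cp j (map (take j) M) = mT A \<and> cp (length M - j) (map (drop j) M) = mT B"
proof -
  have "is_mat (length M) j (map (take j) M)" "is_mat (length M) (length M - j) (map (drop j) M)"
    using assms by (auto simp: square_def is_mat_def)
  from cp_cols_eq_iff[OF this(1), of A] cp_cols_eq_iff[OF this(2), of B] show ?thesis
    by (auto simp: take_mT[OF assms(2)] drop_mT[OF assms(1)])
qed

lemma fsupp_Delta_PM:
  assumes "x \<in> PMk k"
  shows "finite (fsupp (Delta_PM x))" and "\<forall>(A, B)\<in>fsupp (Delta_PM x). square A \<and> square B"
proof -
  let ?split = "\<lambda>(M, j). (cp j (map (take j) M), cp (length M - j) (map (drop j) M))"
  let ?S = "?split ` {(M, j). M \<in> fsupp x \<and> j \<le> length M \<and>
      cp_square j (map (take j) M) \<and> cp_square (length M - j) (map (drop j) M)}"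
  have "fsupp (Delta_PM x) \<subseteq> ?S"
    unfolding Delta_PM_def fsupp_def
    by (force elim!: sum.not_neutral_contains_not_neutral simp: Let_def split: if_splits)
  moreover have "finite (Sigma (fsupp x) (\<lambda>M. {0..length M}))"
    using assms by (simp add: PMk_def)
  then have "finite ?S"
    by (rule finite_imageI[OF finite_subset, rotated]) auto
  moreover have "\<forall>(A, B)\<in>?S. square A \<and> square B"
    by (auto intro: square_cp)
  ultimately show "finite (fsupp (Delta_PM x))" "\<forall>(A, B)\<in>fsupp (Delta_PM x). square A \<and> square B"
    by (auto intro: finite_subset)
qed

lemma phi_Delta:
  assumes x: "x \<in> PMk k"
  shows "Delta_PMd (phi x) = tensor_basis_map mT (Delta_PM x)"
proof (rule ext, clarify)
  fix A B
  let ?col_split = "\<lambda>M i. cp_square i (map (take i) M) \<and> cp_square (length M - i) (map (drop i) M) \<and>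
      cp i (map (take i) M) = mT A \<and> cp (length M - i) (map (drop i) M) = mT B"
  have "Delta_PMd (phi x) (A, B) = (\<Sum>M\<in>fsupp x. x M *
      (\<Sum>i\<in>{0..length M}. if square A \<and> square B \<and> ?col_split M i then 1 else 0))"
    using PMk_imp_square[OF x]
    by (auto simp: Delta_PMd_def fsupp_phi[OF x] sum.reindex inj_on_mT_fsupp[OF x]
        phi_PMk_apply_mT[OF x] Let_def row_split_mT_iff intro!: sum.cong)
  also have "\<dots> = tensor_basis_map mT (Delta_PM x) (A, B)"
    unfolding tensor_basis_map_mT_apply[OF fsupp_Delta_PM[OF x]]
    by (cases "square A"; cases "square B") (simp_all add: Delta_PM_def Let_def)
  finally show "Delta_PMd (phi x) (A, B) = tensor_basis_map mT (Delta_PM x) (A, B)" .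
qed

theorem proposition2p5:
  fixes k :: nat
  assumes "k \<ge> 1"
  shows "hopf_iso_phi k TYPE('a::field)"
  unfolding hopf_iso_phi_def
  using bij_betw_phi phi_linear phi_mult phi_unit phi_Delta phi_counit by blast

end
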